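(* Let $M$ be a matroid on a finite set $E$ with $r(M)>0$ and let $B\in\mathcal{B}(M)$. Then $|F_M(B)|=r(M)$.
   Context: For a matroid $M$: $\mathcal{I}(M)$ its independent sets, $\mathcal{B}(M)$ its bases, $r(M)$ the size of a base, $r(X)$ the rank of $X\subseteq E$. $s(M)=\{A\in\mathcal{I}(M): |A|=r(M)-1\}$; $K_M(X)=\{a\in E: r(X\cup\{a\})=r(X)+1\}$; $F_M(B)=\{K_M(X): X\in s(M),\ X\subseteq B\}$ (a set of sets, so $|F_M(B)|$ counts distinct sets). *)

theory Defs
  imports Main
begin

definition matroid :: "'a set \<Rightarrow> 'a set set \<Rightarrow> bool" where
  "matroid E \<I> \<longleftrightarrow> finite E
     \<and> (\<forall>A\<in>\<I>. A \<subseteq> E)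
     \<and> {} \<in> \<I>
     \<and> (\<forall>A B. A \<in> \<I> \<and> B \<subseteq> A \<longrightarrow> B \<in> \<I>)
     \<and> (\<forall>A B. A \<in> \<I> \<and> B \<in> \<I> \<and> card A < card B \<longrightarrow> (\<exists>x\<in>B - A. insert x A \<in> \<I>))"

definition rk :: "'a set set \<Rightarrow> 'a set \<Rightarrow> nat" where
  "rk \<I> X = Max (card ` {A. A \<in> \<I> \<and> A \<subseteq> X})"

definition bases :: "'a set set \<Rightarrow> 'a set set" where
  "bases \<I> = {B. B \<in> \<I> \<and> (\<forall>A\<in>\<I>. B \<subseteq> A \<longrightarrow> A = B)}"

definition mrank :: "'a set \<Rightarrow> 'a set set \<Rightarrow> nat" where
  "mrank E \<I> = rk \<I> E"

definition s_sets :: "'a set \<Rightarrow> 'a set set \<Rightarrow> 'a set set" where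
  "s_sets E \<I> = {A. A \<in> \<I> \<and> card A = mrank E \<I> - 1}"

definition K_set :: "'a set \<Rightarrow> 'a set set \<Rightarrow> 'a set \<Rightarrow> 'a set" where
  "K_set E \<I> X = {a. a \<in> E \<and> rk \<I> (insert a X) = rk \<I> X + 1}"

definition F_fam :: "'a set \<Rightarrow> 'a set set \<Rightarrow> 'a set \<Rightarrow> 'a set set" where
  "F_fam E \<I> B = {K_set E \<I> X | X. X \<in> s_sets E \<I> \<and> X \<subseteq> B}"

end

theory Submission
  imports Defs
begin

text \<open>For a basis B, the (r-1)-subsets of B are exactly the sets B - {b} with b in B, and
  K(B - {b}) contains b but no other element of B. Hence X \<mapsto> K(X) is injective on these
  r sets, and F(B) has exactly r elements.\<close>

lemma matroid_indep_subset_ground: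
  assumes "matroid E \<I>" and "X \<in> \<I>"
  shows "X \<subseteq> E"
  using assms by (simp add: matroid_def)

lemma matroid_indep_finite:
  assumes "matroid E \<I>" and "X \<in> \<I>"
  shows "finite X"
  using assms matroid_indep_subset_ground finite_subset by (metis matroid_def)

lemma matroid_indep_subset:
  assumes "matroid E \<I>" and "A \<in> \<I>" and "B \<subseteq> A"
  shows "B \<in> \<I>"
  using assms unfolding matroid_def by meson

lemma rk_indep:
  assumes m: "matroid E \<I>" and X: "X \<in> \<I>"
  shows "rk \<I> X = card X"
proof -
  have fX: "finite X" using matroid_indep_finite[OF m X] .
  let ?S = "{A. A \<in> \<I> \<and> A \<subseteq> X}"
  have "finite ?S" by (rule finite_subset[of _ "Pow X"]) (auto simp: fX)
  moreover have "X \<in> ?S" using X by auto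
  moreover have "\<forall>A\<in>?S. card A \<le> card X" using fX by (auto intro: card_mono)
  ultimately show ?thesis unfolding rk_def by (intro Max_eqI) auto
qed

lemma card_base_eq_mrank:
  assumes m: "matroid E \<I>" and B: "B \<in> bases \<I>"
  shows "card B = mrank E \<I>"
proof -
  have fE: "finite E" using m by (simp add: matroid_def)
  have aug: "\<And>A B. A \<in> \<I> \<Longrightarrow> B \<in> \<I> \<Longrightarrow> card A < card B \<Longrightarrow> \<exists>x\<in>B - A. insert x A \<in> \<I>"
    using m by (simp add: matroid_def)
  have BI: "B \<in> \<I>" and maximal: "\<And>A. A \<in> \<I> \<Longrightarrow> B \<subseteq> A \<Longrightarrow> A = B"
    using B by (auto simp: bases_def)
  let ?S = "{A. A \<in> \<I> \<and> A \<subseteq> E}"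
  have "finite ?S" by (rule finite_subset[of _ "Pow E"]) (auto simp: fE)
  moreover have "B \<in> ?S" using BI matroid_indep_subset_ground[OF m] by auto
  moreover have "card A \<le> card B" if A: "A \<in> \<I>" for A
  proof (rule ccontr)
    assume "\<not> card A \<le> card B"
    then obtain x where "x \<in> A - B" "insert x B \<in> \<I>" using aug[OF BI A] by auto
    with maximal show False by blast
  qed
  ultimately show ?thesis unfolding mrank_def rk_def by (intro Max_eqI[symmetric]) auto
qed

lemma K_set_disjoint: "K_set E \<I> X \<inter> X = {}"
  unfolding K_set_def by (auto simp: insert_absorb)

lemma in_K_set_Diff_singleton:
  assumes m: "matroid E \<I>" and I: "I \<in> \<I>" and b: "b \<in> I"
  shows "b \<in> K_set E \<I> (I - {b})"
proof -
  have "I - {b} \<in> \<I>" using matroid_indep_subset[OF m I] by blast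
  moreover have "card I > 0" using matroid_indep_finite[OF m I] b by (auto simp: card_gt_0_iff)
  ultimately have "rk \<I> (I - {b}) + 1 = card I"
    using rk_indep[OF m] matroid_indep_finite[OF m I] b by simp
  moreover have "b \<in> E" using matroid_indep_subset_ground[OF m I] b by blast
  ultimately show ?thesis
    using rk_indep[OF m I] b unfolding K_set_def by (simp add: insert_absorb)
qed

lemma subset_card_pred_eq_Diff_singleton:
  assumes "finite B" "X \<subseteq> B" "card X = card B - 1" "card B > 0"
  obtains b where "b \<in> B" "X = B - {b}"
proof -
  have "card (B - X) = 1"
    using assms by (simp add: card_Diff_subset finite_subset)
  then obtain b where "B - X = {b}" by (rule card_1_singletonE)
  with assms(2) show ?thesis by (intro that) auto
qed

lemma F_fam_eq_image:
  assumes m: "matroid E \<I>" and r: "mrank E \<I> > 0" and B: "B \<in> bases \<I>"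
  shows "F_fam E \<I> B = (\<lambda>b. K_set E \<I> (B - {b})) ` B"
proof -
  have BI: "B \<in> \<I>" using B by (simp add: bases_def)
  have fB: "finite B" using matroid_indep_finite[OF m BI] .
  have cB: "card B = mrank E \<I>" using card_base_eq_mrank[OF m B] .
  have s_sets_in_B: "{X \<in> s_sets E \<I>. X \<subseteq> B} = (\<lambda>b. B - {b}) ` B"
  proof (intro equalityI subsetI)
    fix X assume "X \<in> {X \<in> s_sets E \<I>. X \<subseteq> B}"
    then have X: "X \<subseteq> B" "card X = card B - 1" using cB by (auto simp: s_sets_def)
    obtain b where "b \<in> B" "X = B - {b}"
      using subset_card_pred_eq_Diff_singleton[OF fB X] cB r by auto
    then show "X \<in> (\<lambda>b. B - {b}) ` B" by blast
  next
    fix X assume "X \<in> (\<lambda>b. B - {b}) ` B"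
    then obtain b where b: "b \<in> B" "X = B - {b}" by blast
    then have "X \<in> \<I>" using matroid_indep_subset[OF m BI] by blast
    with b fB cB show "X \<in> {X \<in> s_sets E \<I>. X \<subseteq> B}" by (auto simp: s_sets_def)
  qed
  have "F_fam E \<I> B = K_set E \<I> ` {X \<in> s_sets E \<I>. X \<subseteq> B}"
    unfolding F_fam_def by blast
  also have "\<dots> = (\<lambda>b. K_set E \<I> (B - {b})) ` B"
    unfolding s_sets_in_B image_image ..
  finally show ?thesis .
qed

lemma inj_on_K_set_Diff_singleton:
  assumes "matroid E \<I>" and "I \<in> \<I>"
  shows "inj_on (\<lambda>b. K_set E \<I> (I - {b})) I"
proof (rule inj_onI, rule ccontr)
  fix b c
  assume b: "b \<in> I" and "c \<in> I" and "b \<noteq> c"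
    and eq: "K_set E \<I> (I - {b}) = K_set E \<I> (I - {c})"
  have "b \<in> K_set E \<I> (I - {c})"
    using in_K_set_Diff_singleton[OF assms b] unfolding eq .
  moreover have "b \<in> I - {c}" using b \<open>b \<noteq> c\<close> by simp
  ultimately show False using K_set_disjoint[of E \<I> "I - {c}"] by blast
qed

theorem proposition2:
  fixes E :: "'a set" and \<I> :: "'a set set" and B :: "'a set"
  assumes "matroid E \<I>"
    and "mrank E \<I> > 0"
    and "B \<in> bases \<I>"
  shows "card (F_fam E \<I> B) = mrank E \<I>"
proof -
  have "B \<in> \<I>" using assms(3) by (simp add: bases_def)
  then have "card ((\<lambda>b. K_set E \<I> (B - {b})) ` B) = card B"
    by (rule card_image[OF inj_on_K_set_Diff_singleton[OF assms(1)]])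
  then show ?thesis
    using F_fam_eq_image[OF assms] card_base_eq_mrank[OF assms(1,3)] by simp
qed

end
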